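(* Let $I$ be a (finite or infinite) interval of $\mathbb Z$ and $Z=\{(Z^{(t)}_s)_{s\ge t,s\in I}\}_{t\in I}$ a coalescent-walk process on $I$. Define the relation $\le_Z$ on $I$ by: $i\le_Z i$; for $i<j$, $i\le_Z j$ if $Z^{(i)}_j<0$ and $j\le_Z i$ if $Z^{(i)}_j\ge0$. Then $\le_Z$ is a total order on $I$.
   Context: A coalescent-walk process on $I$ is a family $\{(Z^{(t)}_s)_{s\ge t,s\in I}\}_{t\in I}$ of integer-valued walks such that $Z^{(t)}_t=0$ for every $t\in I$, and for $t'\ge t$ in $I$, if $Z^{(t)}_k\ge Z^{(t')}_k$ (resp. $\le$) then $Z^{(t)}_{k'}\ge Z^{(t')}_{k'}$ (resp. $\le$) for every $k'\ge k$. *)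

theory Defs
  imports Main
begin

definition int_interval :: "int set \<Rightarrow> bool" where
  "int_interval I \<longleftrightarrow> (\<forall>a\<in>I. \<forall>c\<in>I. \<forall>b. a \<le> b \<and> b \<le> c \<longrightarrow> b \<in> I)"

text \<open>A coalescent-walk process on I: Z t s is the value at time s of the walk
  started at time t; only values with t, s in I and s >= t are meaningful.\<close>
definition coalescent_walk_process :: "int set \<Rightarrow> (int \<Rightarrow> int \<Rightarrow> int) \<Rightarrow> bool" where
  "coalescent_walk_process I Z \<longleftrightarrow>
     (\<forall>t\<in>I. Z t t = 0) \<and>
     (\<forall>t\<in>I. \<forall>t'\<in>I. \<forall>k\<in>I. t \<le> t' \<and> t' \<le> k \<longrightarrow>
        (Z t k \<ge> Z t' k \<longrightarrow> (\<forall>k'\<in>I. k \<le> k' \<longrightarrow> Z t k' \<ge> Z t' k')) \<and>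
        (Z t k \<le> Z t' k \<longrightarrow> (\<forall>k'\<in>I. k \<le> k' \<longrightarrow> Z t k' \<le> Z t' k')))"

definition cw_le :: "(int \<Rightarrow> int \<Rightarrow> int) \<Rightarrow> int \<Rightarrow> int \<Rightarrow> bool" where
  "cw_le Z i j \<longleftrightarrow> i = j \<or> (i < j \<and> Z i j < 0) \<or> (j < i \<and> Z j i \<ge> 0)"

definition cw_order :: "int set \<Rightarrow> (int \<Rightarrow> int \<Rightarrow> int) \<Rightarrow> int rel" where
  "cw_order I Z = {(i, j). i \<in> I \<and> j \<in> I \<and> cw_le Z i j}"

end

theory Submission
  imports Defs
begin

text \<open>For times \<open>a \<le> b\<close> the walk started at \<open>b\<close> is \<open>0\<close> at time \<open>b\<close>, so the sign of
  \<open>Z a b\<close> says on which side of it the walk started at \<open>a\<close> lies, and coalescence keeps it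
  on that side (weakly) forever after. Thus \<open>a \<le>\<^sub>Z b\<close> records which of the two walks is
  below the other from time \<open>b\<close> on; transitivity follows by comparing, for three times,
  the walks at the largest of them.\<close>

lemma coalescent_walk_process_start:
  "coalescent_walk_process I Z \<Longrightarrow> t \<in> I \<Longrightarrow> Z t t = 0"
  unfolding coalescent_walk_process_def by blast

lemma coalescent_walk_below_if_nonpos:
  assumes "coalescent_walk_process I Z" "a \<in> I" "b \<in> I" "c \<in> I" "a \<le> b" "b \<le> c"
    and "Z a b \<le> 0"
  shows "Z a c \<le> Z b c"
proof -
  have "Z a b \<le> Z b b"
    using assms coalescent_walk_process_start[OF assms(1,3)] by simp
  with assms show ?thesis
    unfolding coalescent_walk_process_def by blast
qed

lemma coalescent_walk_above_if_nonneg: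
  assumes "coalescent_walk_process I Z" "a \<in> I" "b \<in> I" "c \<in> I" "a \<le> b" "b \<le> c"
    and "Z a b \<ge> 0"
  shows "Z a c \<ge> Z b c"
proof -
  have "Z a b \<ge> Z b b"
    using assms coalescent_walk_process_start[OF assms(1,3)] by simp
  with assms show ?thesis
    unfolding coalescent_walk_process_def by blast
qed

lemma cw_le_trans:
  assumes Z: "coalescent_walk_process I Z"
    and I: "x \<in> I" "y \<in> I" "z \<in> I"
    and xy: "cw_le Z x y" and yz: "cw_le Z y z"
  shows "cw_le Z x z"
proof -
  note below = coalescent_walk_below_if_nonpos[OF Z]
  note above = coalescent_walk_above_if_nonneg[OF Z]
  consider "x = y \<or> y = z \<or> x = z" | "x < y" "y < z" | "x < z" "z < y" | "y < x" "x < z"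
    | "y < z" "z < x" | "z < x" "x < y" | "z < y" "y < x"
    by linarith
  then show ?thesis
  proof cases
    case 1
    with xy yz show ?thesis
      unfolding cw_le_def by auto
  next
    case 2
    with xy yz below[of x y z] I show ?thesis
      unfolding cw_le_def by auto
  next
    case 3
    with xy yz above[of x z y] I show ?thesis
      unfolding cw_le_def by force
  next
    case 4
    with xy yz above[of y x z] I show ?thesis
      unfolding cw_le_def by auto
  next
    case 5
    with xy yz below[of y z x] I show ?thesis
      unfolding cw_le_def by auto
  next
    case 6
    with xy yz below[of z x y] I show ?thesis
      unfolding cw_le_def by force
  next
    case 7
    with xy yz above[of z y x] I show ?thesis
      unfolding cw_le_def by auto
  qed
qed

theorem proposition2p9:
  fixes I :: "int set" and Z :: "int \<Rightarrow> int \<Rightarrow> int"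
  assumes "int_interval I"
    and "coalescent_walk_process I Z"
  shows "linear_order_on I (cw_order I Z)"
  unfolding linear_order_on_def partial_order_on_def preorder_on_def
proof (intro conjI)
  show "cw_order I Z \<subseteq> I \<times> I" "refl_on I (cw_order I Z)"
    "antisym (cw_order I Z)" "total_on I (cw_order I Z)"
    unfolding cw_order_def refl_on_def antisym_def total_on_def cw_le_def by auto
  show "trans (cw_order I Z)"
    using cw_le_trans[OF assms(2)] unfolding trans_def cw_order_def by blast
qed

end
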